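(* Let $\mathcal{Z}=\mathcal{X}\times\mathcal{Y}$ with $\mathcal{X}\subseteq\mathbb{R}^d$, let $\mathcal{D}_S$ (source) and $\mathcal{D}_T$ (target) be probability distributions on $\mathcal{Z}$, let $S=\{\boldsymbol{z}_i\}_{i=1}^n$ be a training set of $n$ i.i.d. samples from $\mathcal{D}_S$, and let $\hat{\mathcal{D}}_T$ be an empirical sample of size $n$ drawn i.i.d. from $\mathcal{D}_T$. Assume the loss satisfies $0\le \ell_{\boldsymbol{\theta}}(\boldsymbol{z})\le M$ for all $\boldsymbol{z}\in\mathcal{Z}$. Then for every $\delta\in(0,1)$, with probability at least $1-\delta$ (over the choice of the samples), for every model $f_{\boldsymbol{\theta}}$ trained on $S$ that is $(K,\epsilon(S))$-robust with partition $\{C_i\}_{i=1}^K$, we have $$\mathcal{L}_T(f_{\boldsymbol{\theta}})\le \widehat{\mathcal{L}}_S(f_{\boldsymbol{\theta}})+M\, d_{(\epsilon,K)}(S,\hat{\mathcal{D}}_T)+2\epsilon(S)+3M\sqrt{\frac{2K\ln 2+2\ln(2/\delta)}{n}},$$ where $d_{(\epsilon,K)}(S,\hat{\mathcal{D}}_T):=\sum_{i=1}^K\left|\frac{n_i(S)}{n}-\frac{n_i(\hat{\mathcal{D}}_T)}{n}\right|$ and $n_i(S)$, $n_i(\hat{\mathcal{D}}_T)$ denote the numbers of samples of $S$ and of $\hat{\mathcal{D}}_T$, respectively, that fall into $C_i$.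
   Context: A model $f_{\boldsymbol{\theta}}$ with parameters $\boldsymbol{\theta}$ maps inputs $\boldsymbol{x}\in\mathcal{X}$ to $\mathbb{R}$; for $\boldsymbol{z}=(\boldsymbol{x},y)$ write $\ell_{\boldsymbol{\theta}}(\boldsymbol{z})=\ell(f(\boldsymbol{\theta},\boldsymbol{x}),y)$ for a loss $\ell:\mathbb{R}\times\mathbb{R}\to\mathbb{R}_+$. Expected risks: $\mathcal{L}_S(f_{\boldsymbol{\theta}})=\mathbb{E}_{\boldsymbol{z}\sim\mathcal{D}_S}[\ell_{\boldsymbol{\theta}}(\boldsymbol{z})]$, $\mathcal{L}_T(f_{\boldsymbol{\theta}})=\mathbb{E}_{\boldsymbol{z}\sim\mathcal{D}_T}[\ell_{\boldsymbol{\theta}}(\boldsymbol{z})]$; empirical source risk $\widehat{\mathcal{L}}_S(f_{\boldsymbol{\theta}})=\frac1n\sum_{\boldsymbol{z}_i\in S}\ell_{\boldsymbol{\theta}}(\boldsymbol{z}_i)$. Robustness (Xu–Mannor): a model $f_{\boldsymbol{\theta}}$ trained on $S$ is $(K,\epsilon(S))$-robust, for $K\in\mathbb{N}$, if $\mathcal{Z}$ can be partitioned into $K$ disjoint sets $\{C_i\}_{i=1}^K$ such that for all $\boldsymbol{s}\in S$ and $\boldsymbol{z}\in\mathcal{Z}$ and all $i\in[K]$: $\boldsymbol{s},\boldsymbol{z}\in C_i\Rightarrow|\ell_{\boldsymbol{\theta}}(\boldsymbol{s})-\ell_{\boldsymbol{\theta}}(\boldsymbol{z})|\le\epsilon(S)$.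 *)

theory Defs
  imports "HOL-Probability.Probability"
begin

definition loss_at :: "(real \<Rightarrow> real \<Rightarrow> real) \<Rightarrow> ('p \<Rightarrow> 'x \<Rightarrow> real) \<Rightarrow> 'p \<Rightarrow> 'x \<times> real \<Rightarrow> real" where
  "loss_at l f th z = l (f th (fst z)) (snd z)"

definition expected_risk :: "('x \<times> real) measure \<Rightarrow> (real \<Rightarrow> real \<Rightarrow> real) \<Rightarrow> ('p \<Rightarrow> 'x \<Rightarrow> real) \<Rightarrow> 'p \<Rightarrow> real" where
  "expected_risk D l f th = (\<integral>z. loss_at l f th z \<partial>D)"

definition empirical_risk :: "nat \<Rightarrow> (nat \<Rightarrow> 'x \<times> real) \<Rightarrow> (real \<Rightarrow> real \<Rightarrow> real) \<Rightarrow> ('p \<Rightarrow> 'x \<Rightarrow> real) \<Rightarrow> 'p \<Rightarrow> real" where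
  "empirical_risk n S l f th = (\<Sum>j<n. loss_at l f th (S j)) / real n"

definition is_partition :: "'z set \<Rightarrow> nat \<Rightarrow> (nat \<Rightarrow> 'z set) \<Rightarrow> bool" where
  "is_partition Z K C \<longleftrightarrow>
     (\<forall>i<K. C i \<subseteq> Z) \<and> (\<Union>i<K. C i) = Z \<and> (\<forall>i<K. \<forall>j<K. i \<noteq> j \<longrightarrow> C i \<inter> C j = {})"

definition robust :: "'z set \<Rightarrow> nat \<Rightarrow> (nat \<Rightarrow> 'z set) \<Rightarrow> ('z \<Rightarrow> real) \<Rightarrow> nat \<Rightarrow> (nat \<Rightarrow> 'z) \<Rightarrow> real \<Rightarrow> bool" where
  "robust Z K C L n S eps \<longleftrightarrow>
     (\<forall>s \<in> S ` {..<n}. \<forall>z \<in> Z. \<forall>i<K. s \<in> C i \<and> z \<in> C i \<longrightarrow> \<bar>L s - L z\<bar> \<le> eps)"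

definition n_in :: "(nat \<Rightarrow> 'z set) \<Rightarrow> nat \<Rightarrow> nat \<Rightarrow> (nat \<Rightarrow> 'z) \<Rightarrow> nat" where
  "n_in C i n S = card {j \<in> {..<n}. S j \<in> C i}"

definition d_epsK :: "nat \<Rightarrow> (nat \<Rightarrow> 'z set) \<Rightarrow> nat \<Rightarrow> (nat \<Rightarrow> 'z) \<Rightarrow> (nat \<Rightarrow> 'z) \<Rightarrow> real" where
  "d_epsK K C n S T = (\<Sum>i<K. \<bar>real (n_in C i n S) / real n - real (n_in C i n T) / real n\<bar>)"

end

theory Submission
  imports Defs
begin

(* Decompose the target risk over the cells C i. On a cell that contains training samples,
   robustness bounds the loss by the average training loss on that cell plus eps, and the loss
   is at most M everywhere; integrating this constant bound over the cell and comparing D_T (C i)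
   with the empirical frequency n_i(S)/n gives
     L_T <= L_S^ + eps + M * sum_i |n_i(S)/n - D_T (C i)|.
   The triangle inequality through n_i(T)/n splits the sum into d(S,T) and the L1 deviation of
   the cell frequencies of the target sample from D_T. That deviation is at most twice the
   largest deviation over unions of cells, so Hoeffding's inequality and a union bound over the
   2^K unions make it at most sqrt ((2 K ln 2 + 2 ln (2/delta)) / n) with probability 1 - delta.
   The source sample lies in Z^n almost surely. The factors 2 and 3 in front of eps and M in the
   statement are slack. *)

section \<open>Partitions and cell counts\<close>

lemma is_partition_disjoint_family:
  "is_partition Z K C \<Longrightarrow> disjoint_family_on C {..<K}"
  unfolding is_partition_def disjoint_family_on_def by blast

lemma sum_indicator_disjoint_le_1:
  assumes "finite A" and "disjoint_family_on C A"
  shows "(\<Sum>i\<in>A. indicator (C i) z :: real) \<le> 1"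
proof -
  have "(\<Sum>i\<in>A. indicator (C i) z :: real) = indicator (\<Union>(C ` A)) z"
    by (rule indicator_UN_disjoint[OF assms, symmetric])
  then show ?thesis by (simp add: indicator_def)
qed

lemma sum_indicator_partition:
  assumes "is_partition Z K C" and "z \<in> Z"
  shows "(\<Sum>i<K. indicator (C i) z :: real) = 1"
proof -
  have "(\<Sum>i<K. indicator (C i) z :: real) = indicator (\<Union>i<K. C i) z"
    by (rule indicator_UN_disjoint[OF _ is_partition_disjoint_family[OF assms(1)], symmetric]) simp
  also have "(\<Union>i<K. C i) = Z"
    using assms(1) unfolding is_partition_def by blast
  finally show ?thesis using assms(2) by simp
qed

lemma n_in_eq_sum_indicator: "real (n_in C i n S) = (\<Sum>j<n. indicator (C i) (S j))"
  by (simp add: n_in_def indicator_def sum_of_bool_eq Int_def)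

lemma sum_n_in_partition:
  assumes "is_partition Z K C" and "\<And>j. j < n \<Longrightarrow> S j \<in> Z"
  shows "(\<Sum>i<K. real (n_in C i n S)) = real n"
proof -
  have "(\<Sum>i<K. real (n_in C i n S)) = (\<Sum>j<n. \<Sum>i<K. indicator (C i) (S j))"
    unfolding n_in_eq_sum_indicator by (rule sum.swap)
  also have "\<dots> = (\<Sum>j<n. 1)"
    using assms by (intro sum.cong) (simp_all add: sum_indicator_partition)
  finally show ?thesis by simp
qed

lemma borel_measurable_n_in [measurable]:
  assumes "C i \<in> sets D"
  shows "(\<lambda>T. real (n_in C i n T)) \<in> borel_measurable (PiM {..<n} (\<lambda>_. D))"
  unfolding n_in_eq_sum_indicator using assms by measurable

section \<open>Random samples and concentration of cell frequencies\<close>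

lemma measure_pair_measure_Times:
  assumes "sigma_finite_measure N" and "A \<in> sets M" and "B \<in> sets N"
  shows "measure (M \<Otimes>\<^sub>M N) (A \<times> B) = measure M A * measure N B"
  using sigma_finite_measure.emeasure_pair_measure_Times[OF assms]
  unfolding measure_def by (simp add: enn2real_mult)

lemma PiE_full_measure:
  assumes "prob_space D" and "finite I" and "Z \<in> sets D" and "measure D Z = 1"
  shows "PiE I (\<lambda>_. Z) \<in> sets (PiM I (\<lambda>_. D))" and "measure (PiM I (\<lambda>_. D)) (PiE I (\<lambda>_. Z)) = 1"
proof -
  interpret D: prob_space D by (fact assms(1))
  interpret P: finite_product_prob_space "\<lambda>_. D" I
    by unfold_locales (simp add: assms(2))
  show "PiE I (\<lambda>_. Z) \<in> sets (PiM I (\<lambda>_. D))"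
    using assms(3) by (auto intro: sets_PiM_I_finite simp: assms(2))
  show "measure (PiM I (\<lambda>_. D)) (PiE I (\<lambda>_. Z)) = 1"
    using P.prob_times[of "\<lambda>_. Z"] assms(3,4) by simp
qed

lemma indep_vars_PiM_components:
  assumes "finite I" and "I \<noteq> {}" and "\<And>i. i \<in> I \<Longrightarrow> prob_space (M i)"
  shows "prob_space.indep_vars (PiM I M) M (\<lambda>i x. x i) I"
proof -
  interpret P: prob_space "PiM I M"
    by (rule prob_space_PiM) (use assms(3) in auto)
  have "distr (PiM I M) (PiM I M) (\<lambda>x. \<lambda>i\<in>I. x i) = PiM I M"
    by (subst distr_cong[where g = "\<lambda>x. x"]) (auto simp: space_PiM PiE_def extensional_restrict)
  also have "\<dots> = PiM I (\<lambda>i. distr (PiM I M) (M i) (\<lambda>x. x i))"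
    by (rule PiM_cong) (auto intro!: distr_PiM_component[symmetric] assms)
  finally show ?thesis
    by (subst P.indep_vars_iff_distr_eq_PiM'[OF assms(2)]) auto
qed

lemma Hoeffding_PiM_iid:
  fixes D :: "'a measure" and g :: "'a \<Rightarrow> real" and n :: nat and t :: real
  defines "P \<equiv> PiM {..<n} (\<lambda>_. D)"
  assumes D: "prob_space D" and g [measurable]: "g \<in> borel_measurable D"
    and g_range: "\<And>z. z \<in> space D \<Longrightarrow> g z \<in> {a..b}" and "a < b" and "n > 0" and "t \<ge> 0"
  shows "measure P {T \<in> space P. \<bar>(\<Sum>j<n. g (T j)) / real n - (\<integral>z. g z \<partial>D)\<bar> \<ge> t}
           \<le> 2 * exp (- 2 * real n * t\<^sup>2 / (b - a)\<^sup>2)"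
proof -
  interpret P: prob_space P
    unfolding P_def by (rule prob_space_PiM) (use D in auto)
  have component_distr: "distr P D (\<lambda>T. T j) = D" if "j < n" for j
    unfolding P_def by (rule distr_PiM_component) (use D that in auto)
  have g_distr: "distr P borel (\<lambda>T. g (T j)) = distr D borel g" if "j < n" for j
  proof -
    have "distr P borel (\<lambda>T. g (T j)) = distr (distr P D (\<lambda>T. T j)) borel g"
      by (subst distr_distr) (use that in \<open>auto simp: P_def comp_def\<close>)
    then show ?thesis using component_distr[OF that] by simp
  qed
  have mean: "(\<integral>z. g z \<partial>D) = P.expectation (\<lambda>T. g (T 0))"
    using integral_distr[of "\<lambda>T. T 0" P D g] component_distr[of 0] \<open>n > 0\<close> by (simp add: P_def)
  interpret H: Hoeffding_ineq_iid P "{..<n}" "\<lambda>j T. g (T j)" "\<lambda>T. g (T 0)" a b "\<integral>z. g z \<partial>D"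
  proof unfold_locales
    have "P.indep_vars (\<lambda>_. D) (\<lambda>j T. T j) {..<n}"
      unfolding P_def by (rule indep_vars_PiM_components) (use D \<open>n > 0\<close> in auto)
    then show "P.indep_vars (\<lambda>_. borel) (\<lambda>j T. g (T j)) {..<n}"
      by (rule P.indep_vars_compose2) simp
    show "distr P borel (\<lambda>T. g (T j)) = distr P borel (\<lambda>T. g (T 0))" if "j \<in> {..<n}" for j
      using g_distr that \<open>n > 0\<close> by simp
    show "AE T in P. g (T 0) \<in> {a..b}"
      using g_range \<open>n > 0\<close> by (intro AE_I2) (auto simp: P_def space_PiM PiE_iff)
    show "(\<integral>z. g z \<partial>D) \<equiv> P.expectation (\<lambda>T. g (T 0))"
      by (rule eq_reflection) (fact mean)
  qed (use \<open>n > 0\<close> in \<open>auto simp: P_def\<close>)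
  show ?thesis
    using H.Hoeffding_ineq_abs_ge'[OF \<open>t \<ge> 0\<close> \<open>a < b\<close>] \<open>n > 0\<close> by auto
qed

lemma sum_abs_le_of_subset_sums:
  fixes x :: "'i \<Rightarrow> real"
  assumes "finite I" and "\<And>A. A \<subseteq> I \<Longrightarrow> \<bar>\<Sum>i\<in>A. x i\<bar> \<le> t"
  shows "(\<Sum>i\<in>I. \<bar>x i\<bar>) \<le> 2 * t"
proof -
  define A where "A = {i \<in> I. x i \<ge> 0}"
  have "(\<Sum>i\<in>I. \<bar>x i\<bar>) = (\<Sum>i\<in>A. \<bar>x i\<bar>) + (\<Sum>i\<in>I - A. \<bar>x i\<bar>)"
    using \<open>finite I\<close> by (simp add: A_def sum.subset_diff[of A I])
  also have "\<dots> = (\<Sum>i\<in>A. x i) + (\<Sum>i\<in>I - A. - x i)"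
    by (intro arg_cong2[where f = "(+)"] sum.cong) (auto simp: A_def)
  also have "\<dots> \<le> 2 * t"
    using assms(2)[of A] assms(2)[of "I - A"] by (auto simp: A_def sum_negf abs_le_iff)
  finally show ?thesis .
qed

lemma cell_frequency_deviation_tail:
  fixes D :: "'a measure" and C :: "nat \<Rightarrow> 'a set" and n :: nat and t :: real
  defines "P \<equiv> PiM {..<n} (\<lambda>_. D)"
  assumes D: "prob_space D" and "n > 0" and C: "\<And>i. i \<in> A \<Longrightarrow> C i \<in> sets D"
    and "finite A" and disj: "disjoint_family_on C A" and "t \<ge> 0"
  shows "measure P {T \<in> space P. t \<le> \<bar>\<Sum>i\<in>A. n_in C i n T / real n - measure D (C i)\<bar>}
           \<le> 2 * exp (- 2 * real n * t\<^sup>2)"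
proof -
  interpret D: prob_space D by (fact D)
  define g where "g z = (\<Sum>i\<in>A. indicator (C i) z :: real)" for z
  have "(\<Sum>j<n. g (T j)) / real n = (\<Sum>i\<in>A. n_in C i n T / real n)" for T
    unfolding g_def n_in_eq_sum_indicator by (simp add: sum.swap[of _ A] sum_divide_distrib)
  moreover have "(\<integral>z. g z \<partial>D) = (\<Sum>i\<in>A. measure D (C i))"
    unfolding g_def using C \<open>finite A\<close>
    by (subst Bochner_Integration.integral_sum)
       (auto intro!: sum.cong integrable_real_indicator simp: Int_absorb2 sets.sets_into_space D.emeasure_eq_measure)
  moreover have "g \<in> borel_measurable D"
    unfolding g_def using C by (intro borel_measurable_sum) auto
  moreover have "g z \<in> {0..1}" for z
    unfolding g_def using \<open>finite A\<close> disj by (auto intro: sum_nonneg sum_indicator_disjoint_le_1)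
  ultimately show ?thesis
    using Hoeffding_PiM_iid[OF D, of g 0 1 n t] \<open>n > 0\<close> \<open>t \<ge> 0\<close>
    by (simp add: P_def sum_subtractf)
qed

(* Bretagnolle-Huber-Carol inequality. *)
lemma L1_deviation_tail:
  fixes D :: "'a measure" and C :: "nat \<Rightarrow> 'a set" and n :: nat and t :: real
  defines "P \<equiv> PiM {..<n} (\<lambda>_. D)"
  assumes D: "prob_space D" and "n > 0" and C: "\<And>i. i < K \<Longrightarrow> C i \<in> sets D"
    and disj: "disjoint_family_on C {..<K}" and "t \<ge> 0"
  shows "measure P {T \<in> space P. 2 * t < (\<Sum>i<K. \<bar>n_in C i n T / real n - measure D (C i)\<bar>)}
           \<le> 2 ^ Suc K * exp (- 2 * real n * t\<^sup>2)"
proof -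
  interpret P: prob_space P
    unfolding P_def by (rule prob_space_PiM) (use D in auto)
  define dev where "dev A T = \<bar>\<Sum>i\<in>A. n_in C i n T / real n - measure D (C i)\<bar>" for A T
  define bad where "bad A = {T \<in> space P. t \<le> dev A T}" for A
  have bad_sets: "bad A \<in> sets P" if "A \<subseteq> {..<K}" for A
  proof -
    have "dev A \<in> borel_measurable P"
      unfolding dev_def P_def using that C by (intro borel_measurable_abs borel_measurable_sum) auto
    then show ?thesis unfolding bad_def by measurable
  qed
  have "{T \<in> space P. 2 * t < (\<Sum>i<K. \<bar>n_in C i n T / real n - measure D (C i)\<bar>)}
          \<subseteq> (\<Union>A\<in>Pow {..<K}. bad A)"
  proof (intro subsetI, rule ccontr)
    fix T assume T: "T \<in> {T \<in> space P. 2 * t < (\<Sum>i<K. \<bar>n_in C i n T / real n - measure D (C i)\<bar>)}"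
      and good: "T \<notin> (\<Union>A\<in>Pow {..<K}. bad A)"
    have "(\<Sum>i<K. \<bar>n_in C i n T / real n - measure D (C i)\<bar>) \<le> 2 * t"
    proof (rule sum_abs_le_of_subset_sums)
      fix A assume "A \<subseteq> {..<K}"
      with good have "T \<notin> bad A" by blast
      with T show "\<bar>\<Sum>i\<in>A. n_in C i n T / real n - measure D (C i)\<bar> \<le> t"
        by (simp add: bad_def dev_def)
    qed simp
    with T show False by simp
  qed
  then have "measure P {T \<in> space P. 2 * t < (\<Sum>i<K. \<bar>n_in C i n T / real n - measure D (C i)\<bar>)}
               \<le> measure P (\<Union>A\<in>Pow {..<K}. bad A)"
    using bad_sets by (intro P.finite_measure_mono) auto
  also have "\<dots> \<le> (\<Sum>A\<in>Pow {..<K}. measure P (bad A))"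
    using bad_sets by (intro measure_UNION_le) auto
  also have "\<dots> \<le> (\<Sum>A\<in>Pow {..<K}. 2 * exp (- 2 * real n * t\<^sup>2))"
    unfolding bad_def dev_def P_def
    using C disj \<open>n > 0\<close> \<open>t \<ge> 0\<close>
    by (intro sum_mono cell_frequency_deviation_tail[OF D])
       (auto intro: finite_subset disjoint_family_on_mono)
  also have "\<dots> = 2 ^ Suc K * exp (- 2 * real n * t\<^sup>2)"
    by (simp add: card_Pow)
  finally show ?thesis .
qed

lemma L1_deviation_confidence:
  fixes D :: "'a measure" and C :: "nat \<Rightarrow> 'a set" and n :: nat and \<delta> :: real
  defines "P \<equiv> PiM {..<n} (\<lambda>_. D)"
  assumes D: "prob_space D" and "n > 0" and C: "\<And>i. i < K \<Longrightarrow> C i \<in> sets D"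
    and disj: "disjoint_family_on C {..<K}" and "0 < \<delta>" and "\<delta> < 1"
  shows "\<exists>E \<in> sets P. measure P E \<ge> 1 - \<delta> \<and>
           (\<forall>T \<in> E. (\<Sum>i<K. \<bar>n_in C i n T / real n - measure D (C i)\<bar>)
                      \<le> sqrt ((2 * real K * ln 2 + 2 * ln (2 / \<delta>)) / real n))"
proof -
  interpret P: prob_space P
    unfolding P_def by (rule prob_space_PiM) (use D in auto)
  define a where "a = real K * ln 2 + ln (2 / \<delta>)"
  define t where "t = sqrt (a / (2 * real n))"
  define dev where "dev T = (\<Sum>i<K. \<bar>n_in C i n T / real n - measure D (C i)\<bar>)" for T
  have "a > 0"
    unfolding a_def using \<open>0 < \<delta>\<close> \<open>\<delta> < 1\<close> by (simp add: add_nonneg_pos)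
  then have "t \<ge> 0" and t_sq: "2 * real n * t\<^sup>2 = a"
    unfolding t_def using \<open>n > 0\<close> by simp_all
  have two_t: "2 * t = sqrt ((2 * real K * ln 2 + 2 * ln (2 / \<delta>)) / real n)"
  proof -
    have "2 * t = sqrt (4 * (a / (2 * real n)))"
      unfolding t_def real_sqrt_mult by simp
    then show ?thesis
      unfolding a_def using \<open>n > 0\<close> by (simp add: field_simps)
  qed
  have tail: "2 ^ Suc K * exp (- 2 * real n * t\<^sup>2) = \<delta>"
  proof -
    have "exp (- 2 * real n * t\<^sup>2) = inverse (exp (real K * ln 2) * exp (ln (2 / \<delta>)))"
      using t_sq unfolding a_def by (simp add: exp_diff exp_minus field_simps)
    also have "\<dots> = inverse (2 ^ K * (2 / \<delta>))"
      using \<open>0 < \<delta>\<close> by (simp add: exp_of_nat_mult)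
    finally show ?thesis by (simp add: field_simps)
  qed
  have [measurable]: "dev \<in> borel_measurable P"
    unfolding dev_def P_def using C by (intro borel_measurable_sum) auto
  define E where "E = {T \<in> space P. dev T \<le> 2 * t}"
  have "E \<in> sets P" unfolding E_def by measurable
  moreover have "measure P E \<ge> 1 - \<delta>"
  proof -
    have "E = space P - {T \<in> space P. 2 * t < dev T}"
      unfolding E_def by auto
    then have "measure P E = 1 - measure P {T \<in> space P. 2 * t < dev T}"
      by (simp add: P.prob_compl)
    moreover have "measure P {T \<in> space P. 2 * t < dev T} \<le> \<delta>"
      using L1_deviation_tail[OF D \<open>n > 0\<close> C disj \<open>t \<ge> 0\<close>] tail
      unfolding dev_def P_def by simp
    ultimately show ?thesis by simp
  qed
  moreover have "\<forall>T \<in> E. dev T \<le> sqrt ((2 * real K * ln 2 + 2 * ln (2 / \<delta>)) / real n)"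
    unfolding E_def two_t by simp
  ultimately show ?thesis unfolding dev_def by blast
qed

section \<open>Risk bound for robust models\<close>

lemma robust_nonneg:
  assumes "robust Z K C L n S eps" and "is_partition Z K C" and "j < n" and "S j \<in> Z"
  shows "0 \<le> eps"
proof -
  obtain i where "i < K" "S j \<in> C i"
    using assms(2,4) unfolding is_partition_def by blast
  then show ?thesis
    using assms(1,3,4) unfolding robust_def by force
qed

lemma robust_cell_count_mult_le:
  assumes rob: "robust Z K C L n S eps" and part: "is_partition Z K C" and "i < K"
    and z: "z \<in> C i"
  shows "real (n_in C i n S) * L z \<le> (\<Sum>j<n. indicator (C i) (S j) * L (S j)) + real (n_in C i n S) * eps"
proof -
  have "z \<in> Z" using part \<open>i < K\<close> z unfolding is_partition_def by blast
  have "indicator (C i) (S j) * L z \<le> indicator (C i) (S j) * (L (S j) + eps)" if "j < n" for j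
  proof (cases "S j \<in> C i")
    case True
    then have "\<bar>L (S j) - L z\<bar> \<le> eps"
      using rob \<open>z \<in> Z\<close> \<open>i < K\<close> z that unfolding robust_def by blast
    with True show ?thesis by simp
  qed simp
  then have "(\<Sum>j<n. indicator (C i) (S j) * L z) \<le> (\<Sum>j<n. indicator (C i) (S j) * (L (S j) + eps))"
    by (intro sum_mono) simp
  then show ?thesis
    by (simp add: n_in_eq_sum_indicator sum_distrib_right distrib_left sum.distrib)
qed

lemma integrable_indicator_mult_bounded:
  fixes L :: "'z \<Rightarrow> real"
  assumes "finite_measure D" and "C \<in> sets D" and "L \<in> borel_measurable D"
    and "\<And>z. z \<in> C \<Longrightarrow> \<bar>L z\<bar> \<le> B" and "0 \<le> B"
  shows "integrable D (\<lambda>z. indicator C z * L z)"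
proof (rule finite_measure.integrable_const_bound[OF assms(1), where B = B])
  show "AE z in D. norm (indicator C z * L z) \<le> B"
    using assms(4,5) by (intro AE_I2) (auto simp: indicator_def)
qed (use assms(2,3) in measurable)

lemma robust_cell_uniform_bound:
  assumes L_bounds: "\<And>z. z \<in> Z \<Longrightarrow> 0 \<le> L z \<and> L z \<le> M" and "0 \<le> M"
    and part: "is_partition Z K C" and "i < K"
    and SZ: "\<And>j. j < n \<Longrightarrow> S j \<in> Z" and rob: "robust Z K C L n S eps"
  obtains c where "0 \<le> c" "c \<le> M" "\<And>z. z \<in> C i \<Longrightarrow> L z \<le> c"
    and "real (n_in C i n S) * c \<le> (\<Sum>j<n. indicator (C i) (S j) * L (S j)) + real (n_in C i n S) * eps"
proof -
  define N where "N = real (n_in C i n S)"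
  define s where "s = (\<Sum>j<n. indicator (C i) (S j) * L (S j))"
  have Ci_Z: "C i \<subseteq> Z" using part \<open>i < K\<close> unfolding is_partition_def by blast
  have "s \<ge> 0" unfolding s_def using SZ L_bounds by (auto intro!: sum_nonneg)
  show thesis
  proof (cases "N = 0")
    case True
    show thesis by (rule that[of M]) (use \<open>0 \<le> M\<close> Ci_Z L_bounds \<open>s \<ge> 0\<close> True in \<open>auto simp: N_def s_def\<close>)
  next
    case False
    then obtain j where "j < n" "S j \<in> C i"
      unfolding N_def n_in_def by fastforce
    then have "0 \<le> eps" using robust_nonneg[OF rob part \<open>j < n\<close> SZ] by simp
    have "N > 0" using False unfolding N_def by simp
    show thesis
    proof (rule that[of "min M (s / N + eps)"], fold N_def s_def)
      show "0 \<le> min M (s / N + eps)" using \<open>0 \<le> M\<close> \<open>s \<ge> 0\<close> \<open>0 \<le> eps\<close> \<open>N > 0\<close> by simp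
      show "L z \<le> min M (s / N + eps)" if "z \<in> C i" for z
        using robust_cell_count_mult_le[OF rob part \<open>i < K\<close> that] L_bounds[of z] Ci_Z that \<open>N > 0\<close>
        unfolding N_def[symmetric] s_def[symmetric] by (auto simp: field_simps)
      show "N * min M (s / N + eps) \<le> s + N * eps"
        using \<open>N > 0\<close> by (simp add: min_def field_simps)
    qed simp
  qed
qed

lemma robust_cell_integral_le:
  fixes D :: "'z measure" and L :: "'z \<Rightarrow> real"
  assumes D: "prob_space D" and L: "L \<in> borel_measurable D"
    and L_bounds: "\<And>z. z \<in> Z \<Longrightarrow> 0 \<le> L z \<and> L z \<le> M" and "0 \<le> M" and "n > 0"
    and part: "is_partition Z K C" and Ci: "C i \<in> sets D" and "i < K"
    and SZ: "\<And>j. j < n \<Longrightarrow> S j \<in> Z" and rob: "robust Z K C L n S eps"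
  shows "(\<integral>z. indicator (C i) z * L z \<partial>D)
           \<le> (\<Sum>j<n. indicator (C i) (S j) * L (S j)) / real n
              + M * \<bar>real (n_in C i n S) / real n - measure D (C i)\<bar>
              + real (n_in C i n S) / real n * eps"
proof -
  interpret D: prob_space D by (fact D)
  define N where "N = real (n_in C i n S)"
  define s where "s = (\<Sum>j<n. indicator (C i) (S j) * L (S j))"
  define p where "p = measure D (C i)"
  obtain c where "0 \<le> c" "c \<le> M" and c_bound: "\<And>z. z \<in> C i \<Longrightarrow> L z \<le> c"
    and "N * c \<le> s + N * eps"
    using robust_cell_uniform_bound[OF L_bounds \<open>0 \<le> M\<close> part \<open>i < K\<close> SZ rob]
    unfolding N_def s_def by blast
  have "C i \<subseteq> Z" using part \<open>i < K\<close> unfolding is_partition_def by blast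
  then have "integrable D (\<lambda>z. indicator (C i) z * L z)"
    using L_bounds \<open>0 \<le> M\<close> by (intro integrable_indicator_mult_bounded[OF _ Ci L, where B = M]) auto
  moreover have "integrable D (\<lambda>z. indicator (C i) z * c)"
    using Ci by (intro integrable_mult_left integrable_real_indicator) (auto simp: D.emeasure_eq_measure)
  ultimately have "(\<integral>z. indicator (C i) z * L z \<partial>D) \<le> (\<integral>z. indicator (C i) z * c \<partial>D)"
    using c_bound by (intro integral_mono) (auto simp: indicator_def)
  also have "\<dots> = p * c"
    using Ci unfolding p_def by (simp add: Int_absorb2 sets.sets_into_space)
  also have "\<dots> \<le> (N / n + \<bar>N / n - p\<bar>) * c"
    using \<open>0 \<le> c\<close> by (intro mult_right_mono) auto
  also have "\<dots> = N * c / n + \<bar>N / n - p\<bar> * c"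
    by (simp add: distrib_right)
  also have "\<dots> \<le> (s + N * eps) / n + \<bar>N / n - p\<bar> * M"
    using \<open>N * c \<le> s + N * eps\<close> \<open>c \<le> M\<close>
    by (intro add_mono divide_right_mono mult_left_mono) auto
  also have "\<dots> = s / n + \<bar>N / n - p\<bar> * M + N / n * eps"
    by (simp add: add_divide_distrib)
  finally show ?thesis unfolding N_def s_def p_def by (simp add: mult.commute)
qed

lemma robust_integral_le:
  fixes D :: "'z measure" and L :: "'z \<Rightarrow> real"
  assumes D: "prob_space D" and L: "L \<in> borel_measurable D"
    and "Z \<in> sets D" and "measure D Z = 1"
    and L_bounds: "\<And>z. z \<in> Z \<Longrightarrow> 0 \<le> L z \<and> L z \<le> M" and "0 \<le> M" and "n > 0"
    and part: "is_partition Z K C" and C: "\<And>i. i < K \<Longrightarrow> C i \<in> sets D"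
    and SZ: "\<And>j. j < n \<Longrightarrow> S j \<in> Z" and rob: "robust Z K C L n S eps"
  shows "(\<integral>z. L z \<partial>D) \<le> (\<Sum>j<n. L (S j)) / real n
           + M * (\<Sum>i<K. \<bar>real (n_in C i n S) / real n - measure D (C i)\<bar>) + eps"
proof -
  interpret D: prob_space D by (fact D)
  have C_Z: "C i \<subseteq> Z" if "i < K" for i
    using part that unfolding is_partition_def by blast
  have "AE z in D. z \<in> Z"
    using \<open>Z \<in> sets D\<close> \<open>measure D Z = 1\<close> by (intro D.AE_prob_1) simp
  then have "(\<integral>z. L z \<partial>D) = (\<integral>z. (\<Sum>i<K. indicator (C i) z * L z) \<partial>D)"
    using L C by (intro integral_cong_AE) (auto simp: sum_distrib_right[symmetric] sum_indicator_partition[OF part])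
  also have "\<dots> = (\<Sum>i<K. \<integral>z. indicator (C i) z * L z \<partial>D)"
    using C_Z L_bounds \<open>0 \<le> M\<close>
    by (intro Bochner_Integration.integral_sum integrable_indicator_mult_bounded[OF _ C L, where B = M])
       (force simp: D.finite_measure_axioms)+
  also have "\<dots> \<le> (\<Sum>i<K. (\<Sum>j<n. indicator (C i) (S j) * L (S j)) / real n
                + M * \<bar>real (n_in C i n S) / real n - measure D (C i)\<bar>
                + real (n_in C i n S) / real n * eps)"
    by (intro sum_mono robust_cell_integral_le[OF D L L_bounds \<open>0 \<le> M\<close> \<open>n > 0\<close> part C _ SZ rob]) auto
  also have "\<dots> = (\<Sum>j<n. \<Sum>i<K. indicator (C i) (S j) * L (S j)) / real n
                + M * (\<Sum>i<K. \<bar>real (n_in C i n S) / real n - measure D (C i)\<bar>)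
                + (\<Sum>i<K. real (n_in C i n S)) / real n * eps"
    by (simp only: sum.distrib sum_divide_distrib sum_distrib_left sum_distrib_right sum.swap[of _ "{..<K}"])
  also have "\<dots> = (\<Sum>j<n. L (S j)) / real n
                + M * (\<Sum>i<K. \<bar>real (n_in C i n S) / real n - measure D (C i)\<bar>) + eps"
    using SZ \<open>n > 0\<close>
    by (simp add: sum_n_in_partition[OF part] sum_distrib_right[symmetric] sum_indicator_partition[OF part])
  finally show ?thesis .
qed

lemma expected_risk_le_robust:
  fixes D :: "('x \<times> real) measure"
  assumes D: "prob_space D" and L: "loss_at l f th \<in> borel_measurable D"
    and Z: "Z \<in> sets D" "measure D Z = 1"
    and L_bounds: "\<And>z. z \<in> Z \<Longrightarrow> 0 \<le> loss_at l f th z \<and> loss_at l f th z \<le> M"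
    and "0 \<le> M" and "n > 0"
    and part: "is_partition Z K C" and C: "\<And>i. i < K \<Longrightarrow> C i \<in> sets D"
    and SZ: "\<And>j. j < n \<Longrightarrow> S j \<in> Z" and rob: "robust Z K C (loss_at l f th) n S eps"
    and T_close: "(\<Sum>i<K. \<bar>real (n_in C i n T) / real n - measure D (C i)\<bar>) \<le> r"
  shows "expected_risk D l f th \<le> empirical_risk n S l f th + M * d_epsK K C n S T + M * r + eps"
proof -
  have "(\<Sum>i<K. \<bar>real (n_in C i n S) / real n - measure D (C i)\<bar>)
          \<le> d_epsK K C n S T + (\<Sum>i<K. \<bar>real (n_in C i n T) / real n - measure D (C i)\<bar>)"
    unfolding d_epsK_def sum.distrib[symmetric] by (rule sum_mono) linarith
  also have "\<dots> \<le> d_epsK K C n S T + r"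
    using T_close by simp
  finally have "M * (\<Sum>i<K. \<bar>real (n_in C i n S) / real n - measure D (C i)\<bar>) \<le> M * d_epsK K C n S T + M * r"
    using \<open>0 \<le> M\<close> by (simp add: mult_left_mono flip: distrib_left)
  with robust_integral_le[OF D L Z L_bounds \<open>0 \<le> M\<close> \<open>n > 0\<close> part C SZ rob] show ?thesis
    unfolding expected_risk_def empirical_risk_def by simp
qed

theorem theorem1:
  fixes X :: "(real ^ 'd) set" and Y :: "real set"
    and DS DT :: "((real ^ 'd) \<times> real) measure"
    and l :: "real \<Rightarrow> real \<Rightarrow> real" and f :: "'p \<Rightarrow> real ^ 'd \<Rightarrow> real"
    and M :: real and n K :: nat and C :: "nat \<Rightarrow> ((real ^ 'd) \<times> real) set"
    and \<delta> :: real
  assumes "prob_space DS" and "prob_space DT"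
    and "sets DS = sets borel" and "sets DT = sets borel"
    and "X \<times> Y \<in> sets borel"
    and "measure DS (X \<times> Y) = 1" and "measure DT (X \<times> Y) = 1"
    and "\<And>th. loss_at l f th \<in> borel_measurable borel"
    and "\<And>th z. z \<in> X \<times> Y \<Longrightarrow> 0 \<le> loss_at l f th z \<and> loss_at l f th z \<le> M"
    and "n > 0"
    and "is_partition (X \<times> Y) K C" and "\<And>i. i < K \<Longrightarrow> C i \<in> sets borel"
    and "0 < \<delta>" and "\<delta> < 1"
  shows "\<exists>E \<in> sets (PiM {..<n} (\<lambda>_. DS) \<Otimes>\<^sub>M PiM {..<n} (\<lambda>_. DT)).
           measure (PiM {..<n} (\<lambda>_. DS) \<Otimes>\<^sub>M PiM {..<n} (\<lambda>_. DT)) E \<ge> 1 - \<delta> \<and>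
           (\<forall>(S, T) \<in> E. \<forall>th eps.
              robust (X \<times> Y) K C (loss_at l f th) n S eps \<longrightarrow>
              expected_risk DT l f th
                \<le> empirical_risk n S l f th + M * d_epsK K C n S T + 2 * eps
                   + 3 * M * sqrt ((2 * real K * ln 2 + 2 * ln (2 / \<delta>)) / real n))"
proof -
  let ?Z = "X \<times> Y" and ?PS = "PiM {..<n} (\<lambda>_. DS)" and ?PT = "PiM {..<n} (\<lambda>_. DT)"
  let ?r = "sqrt ((2 * real K * ln 2 + 2 * ln (2 / \<delta>)) / real n)"
  have C_DT: "C i \<in> sets DT" if "i < K" for i using assms(4,12) that by simp
  have L_DT: "loss_at l f th \<in> borel_measurable DT" for th
    using assms(8) by (subst measurable_cong_sets[OF assms(4) refl])
  have Z_DT: "?Z \<in> sets DT" using assms(4,5) by simp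
  obtain ET where ET: "ET \<in> sets ?PT" "measure ?PT ET \<ge> 1 - \<delta>"
    and T_close: "\<And>T. T \<in> ET \<Longrightarrow> (\<Sum>i<K. \<bar>n_in C i n T / real n - measure DT (C i)\<bar>) \<le> ?r"
    using L1_deviation_confidence[OF assms(2,10) C_DT is_partition_disjoint_family[OF assms(11)] assms(13,14)]
    by blast
  define ES where "ES = PiE {..<n} (\<lambda>_. ?Z)"
  have ES: "ES \<in> sets ?PS" "measure ?PS ES = 1"
    unfolding ES_def using PiE_full_measure[OF assms(1) finite_lessThan[of n] _ assms(6)] assms(3,5) by simp_all
  have "measure (?PS \<Otimes>\<^sub>M ?PT) (ES \<times> ET) \<ge> 1 - \<delta>"
    using measure_pair_measure_Times[OF _ ES(1) ET(1)] ES(2) ET(2)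
      prob_space_imp_sigma_finite[OF prob_space_PiM[of "{..<n}" "\<lambda>_. DT"]] assms(2)
    by simp
  moreover have "expected_risk DT l f th
                   \<le> empirical_risk n S l f th + M * d_epsK K C n S T + 2 * eps + 3 * M * ?r"
    if "S \<in> ES" "T \<in> ET" and rob: "robust ?Z K C (loss_at l f th) n S eps" for S T th eps
  proof -
    have S_Z: "S j \<in> ?Z" if "j < n" for j using \<open>S \<in> ES\<close> that unfolding ES_def by auto
    have "0 \<le> M" using assms(9)[OF S_Z[OF \<open>n > 0\<close>], of th] by linarith
    have "0 \<le> eps" using robust_nonneg[OF rob assms(11) \<open>n > 0\<close> S_Z[OF \<open>n > 0\<close>]] .
    have "0 \<le> ?r" using assms(13,14) by (simp add: add_nonneg_nonneg)
    have "expected_risk DT l f th \<le> empirical_risk n S l f th + M * d_epsK K C n S T + M * ?r + eps"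
      by (rule expected_risk_le_robust[OF assms(2) L_DT Z_DT assms(7,9) \<open>0 \<le> M\<close> assms(10,11)
            C_DT S_Z rob T_close[OF \<open>T \<in> ET\<close>]])
    then show ?thesis
      using \<open>0 \<le> eps\<close> mult_nonneg_nonneg[OF \<open>0 \<le> M\<close> \<open>0 \<le> ?r\<close>] by linarith
  qed
  ultimately show ?thesis
    using ES ET by (intro bexI[of _ "ES \<times> ET"] conjI pair_measureI) auto
qed

end
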